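(* Let $p_1\in[0,1]$ and let $PG_n$ be the random pentagonal chain network described in the context. Then for every $n\geq 1$, $$\mathbb{E}\big(S(PG_{n})\big)=(60-20p_{1})n^{3}+(60p_{1}+7)n^{2}-(40p_{1}+7)n.$$
   Context: Random chain network $PG_n$: $PG_1$ is a $5$-cycle (pentagon). For $n\ge 1$, $PG_{n+1}$ is obtained from $PG_n$ by adding a new pentagon $O_{n+1}$ with vertices $x_1,x_2,x_3,x_4,x_5$ in cyclic (clockwise) order and adding one edge joining $x_1$ to a vertex $u_n$ of $PG_n$. The vertex $u_1$ is any vertex of $PG_1$ (all are equivalent). For $n\ge 2$, $u_n$ is a vertex of the last pentagon $O_n$ (whose vertex $x_1$ is the one joined to $u_{n-1}$): with probability $p_1$ one takes $u_n\in\{x_2,x_5\}$ of $O_n$ (the two neighbours of $x_1$ in $O_n$), and with probability $p_2=1-p_1$ one takes $u_n\in\{x_3,x_4\}$ of $O_n$ (the two vertices at distance $2$ from $x_1$ in $O_n$); $p_1,p_2$ do not depend on the step. Thus $PG_n$ has $5n$ vertices. For a graph $G$, $d(v)$ denotes the degree of vertex $v$ and $d(u,v)$ the shortest-path distance. The Schultz index is $S(G)=\sum_{\{u,v\}\subseteq V_G} \big(d(u)+d(v)\big)\,d(u,v)$, the sum over unordered pairs of distinct vertices. *)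

theory Defs
  imports Complex_Main
begin

text \<open>
  Pentagon O_(k+1) (1-based) is encoded by index k (0-based, k < n); its vertices
  x_1,...,x_5 are encoded as (k,0),...,(k,4) in cyclic order.
  The random choices are a list cs of length n-2: for 0-based pentagon k >= 2,
  vertex (k,0) (= x_1 of O_(k+1)) is joined to (k-1, cs!(k-2)), i.e. to u_k = x_(c+1) of O_k,
  where c = cs!(k-2) is in {1,2,3,4}.  For k = 1, (1,0) is joined to (0,0)
  (u_1 is an arbitrary vertex of PG_1; all are equivalent).
  Choice c in {1,4} (x_2 or x_5) has probability p1/2 each, c in {2,3} (x_3 or x_4)
  has probability p2/2 = (1-p1)/2 each; choices are independent.
\<close>

definition pg_vertices :: "nat \<Rightarrow> (nat \<times> nat) set" where
  "pg_vertices n = {(k, j). k < n \<and> j < 5}"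

definition pg_adj :: "nat \<Rightarrow> nat list \<Rightarrow> nat \<times> nat \<Rightarrow> nat \<times> nat \<Rightarrow> bool" where
  "pg_adj n cs a b \<longleftrightarrow> a \<in> pg_vertices n \<and> b \<in> pg_vertices n \<and>
     ((fst a = fst b \<and> (snd b = (snd a + 1) mod 5 \<or> snd a = (snd b + 1) mod 5))
      \<or> (fst b = 1 \<and> snd b = 0 \<and> a = (0, 0))
      \<or> (fst a = 1 \<and> snd a = 0 \<and> b = (0, 0))
      \<or> (fst b \<ge> 2 \<and> snd b = 0 \<and> a = (fst b - 1, cs ! (fst b - 2)))
      \<or> (fst a \<ge> 2 \<and> snd a = 0 \<and> b = (fst a - 1, cs ! (fst a - 2))))"

definition pg_edges :: "nat \<Rightarrow> nat list \<Rightarrow> ((nat \<times> nat) \<times> (nat \<times> nat)) set" where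
  "pg_edges n cs = {(a, b). pg_adj n cs a b}"

definition pg_deg :: "nat \<Rightarrow> nat list \<Rightarrow> nat \<times> nat \<Rightarrow> nat" where
  "pg_deg n cs v = card {w \<in> pg_vertices n. pg_adj n cs v w}"

definition pg_dist :: "nat \<Rightarrow> nat list \<Rightarrow> nat \<times> nat \<Rightarrow> nat \<times> nat \<Rightarrow> nat" where
  "pg_dist n cs u v = (LEAST k. (u, v) \<in> (pg_edges n cs) ^^ k)"

text \<open>Schultz index: sum over unordered pairs of distinct vertices
  (each unordered pair counted once = half the sum over ordered pairs).\<close>
definition pg_schultz :: "nat \<Rightarrow> nat list \<Rightarrow> real" where
  "pg_schultz n cs = (1/2) * (\<Sum>u\<in>pg_vertices n. \<Sum>v\<in>pg_vertices n - {u}.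
      real ((pg_deg n cs u + pg_deg n cs v) * pg_dist n cs u v))"

definition choice_prob :: "real \<Rightarrow> nat \<Rightarrow> real" where
  "choice_prob p1 c = (if c = 1 \<or> c = 4 then p1 / 2 else (1 - p1) / 2)"

definition choice_seqs :: "nat \<Rightarrow> nat list set" where
  "choice_seqs n = {cs. length cs = n - 2 \<and> set cs \<subseteq> {1, 2, 3, 4}}"

definition expected_schultz :: "real \<Rightarrow> nat \<Rightarrow> real" where
  "expected_schultz p1 n =
     (\<Sum>cs\<in>choice_seqs n. (\<Prod>c\<leftarrow>cs. choice_prob p1 c) * pg_schultz n cs)"

end

theory Submission
  imports Defs
begin

text \<open>
  Encode a chain by its attachment function \<open>g\<close>: pentagon \<open>m + 1\<close> hangs off vertex \<open>g m\<close> of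
  pentagon \<open>m\<close> by an edge to its root \<open>0\<close>. Distances then have a closed form, and the Schultz
  index equals the degree distance \<open>\<Sum>\<^sub>u deg u * D u\<close>, where \<open>D u\<close> is the transmission
  (sum of distances) of \<open>u\<close>. Attaching pentagon \<open>n + 1\<close> at \<open>w = (n - 1, g (n - 1))\<close> raises the
  degree distance by \<open>12 D w + 5 D\<^sub>d\<^sub>e\<^sub>g w + 247 n + 55\<close>, and \<open>D w\<close>, \<open>D\<^sub>d\<^sub>e\<^sub>g w\<close> exceed their
  values at the root of pentagon \<open>n - 1\<close> by \<open>5 (n - 1) c\<close> and \<open>12 (n - 1) c\<close>, where \<open>c\<close> is the
  cyclic distance from that root to \<open>w\<close>. All three quantities thus obey recurrences affine in
  \<open>c\<close>, whose expectation is \<open>2 - p\<^sub>1\<close>, and the expected values solve to polynomials in \<open>n\<close>.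
\<close>

definition cyc_dist :: "nat \<Rightarrow> nat \<Rightarrow> nat" where
  "cyc_dist a b = min ((a + 5 - b) mod 5) ((b + 5 - a) mod 5)"

lemma cyc_dist_commute: "cyc_dist a b = cyc_dist b a"
  by (simp add: cyc_dist_def min.commute)

lemma cyc_dist_self [simp]: "cyc_dist a a = 0"
  by (simp add: cyc_dist_def)

lemma less_5_cases: "(a::nat) < 5 \<Longrightarrow> a = 0 \<or> a = 1 \<or> a = 2 \<or> a = 3 \<or> a = 4"
  by auto

lemma cyc_dist_adjacent_le:
  assumes "a < 5" "x < 5" "y < 5" "y = (x + 1) mod 5 \<or> x = (y + 1) mod 5"
  shows "cyc_dist a y \<le> cyc_dist a x + 1"
  using less_5_cases[OF assms(1)] less_5_cases[OF assms(2)] less_5_cases[OF assms(3)] assms(4)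
  by (auto simp: cyc_dist_def)

lemma sum_lessThan_5: "(\<Sum>j<(5::nat). f j) = f 0 + f 1 + f 2 + f 3 + (f 4 :: 'a::comm_monoid_add)"
  by (simp add: numeral_eq_Suc add.assoc)

lemma sum_cyc_dist: "c < 5 \<Longrightarrow> (\<Sum>a<5. cyc_dist a c) = 6"
  unfolding sum_lessThan_5 using less_5_cases[of c] by (auto simp: cyc_dist_def)

definition attach :: "nat list \<Rightarrow> nat \<Rightarrow> nat" where
  "attach cs m = (if m = 0 then 0 else cs ! (m - 1))"

definition attach_ok :: "nat \<Rightarrow> (nat \<Rightarrow> nat) \<Rightarrow> bool" where
  "attach_ok n g \<longleftrightarrow> (\<forall>m. Suc m < n \<longrightarrow> g m < 5)"

definition chain_edges :: "nat \<Rightarrow> (nat \<Rightarrow> nat) \<Rightarrow> ((nat \<times> nat) \<times> (nat \<times> nat)) set" where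
  "chain_edges n g = {((k, x), (l, y)). k < n \<and> x < 5 \<and> l < n \<and> y < 5 \<and>
     (k = l \<and> (y = (x + 1) mod 5 \<or> x = (y + 1) mod 5)
      \<or> l = Suc k \<and> x = g k \<and> y = 0
      \<or> k = Suc l \<and> x = 0 \<and> y = g l)}"

lemma pg_edges_attach: "pg_edges n cs = chain_edges n (attach cs)"
proof -
  have "pg_adj n cs (k, x) (l, y) \<longleftrightarrow> ((k, x), (l, y)) \<in> chain_edges n (attach cs)" for k x l y
    unfolding pg_adj_def chain_edges_def attach_def pg_vertices_def
    by (cases k; cases l) (auto simp: numeral_2_eq_2)
  then show ?thesis
    unfolding pg_edges_def by auto
qed

lemma attach_ok_choice_seqs:
  assumes "cs \<in> choice_seqs n"
  shows "attach_ok n (attach cs)"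
  unfolding attach_ok_def
proof (intro allI impI)
  fix m assume "Suc m < n"
  then have "m \<noteq> 0 \<Longrightarrow> cs ! (m - 1) \<in> set cs"
    using assms by (simp add: choice_seqs_def)
  then show "attach cs m < 5"
    using assms by (auto simp: attach_def choice_seqs_def)
qed

lemma sym_chain_edges: "sym (chain_edges n g)"
  by (auto simp: sym_def chain_edges_def)

section \<open>Distances\<close>

definition root_dist :: "(nat \<Rightarrow> nat) \<Rightarrow> nat \<Rightarrow> nat \<Rightarrow> nat" where
  "root_dist g i j = (\<Sum>m = i..<j. cyc_dist 0 (g m) + 1)"

lemma root_dist_self [simp]: "root_dist g i i = 0"
  by (simp add: root_dist_def)

lemma root_dist_Suc: "i \<le> j \<Longrightarrow> root_dist g i (Suc j) = root_dist g i j + cyc_dist 0 (g j) + 1"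
  by (simp add: root_dist_def)

lemma root_dist_Suc_left: "i < j \<Longrightarrow> root_dist g i j = cyc_dist 0 (g i) + 1 + root_dist g (Suc i) j"
  by (simp add: root_dist_def sum.atLeast_Suc_lessThan)

text \<open>A shortest path from pentagon \<open>i\<close> to a later pentagon \<open>j\<close> leaves through the attachment
  vertex \<open>g i\<close> and then runs through the roots \<open>(m, 0)\<close> of all pentagons in between.\<close>

fun chain_dist :: "(nat \<Rightarrow> nat) \<Rightarrow> nat \<times> nat \<Rightarrow> nat \<times> nat \<Rightarrow> nat" where
  "chain_dist g (i, a) (j, b) =
    (if i = j then cyc_dist a b
     else if i < j then cyc_dist a (g i) + 1 + root_dist g (Suc i) j + cyc_dist 0 b
     else cyc_dist b (g j) + 1 + root_dist g (Suc j) i + cyc_dist 0 a)"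

declare chain_dist.simps [simp del]

lemma chain_dist_self [simp]: "chain_dist g u u = 0"
  by (cases u) (simp add: chain_dist.simps)

lemma chain_dist_commute: "chain_dist g u v = chain_dist g v u"
  by (cases u; cases v) (auto simp: chain_dist.simps cyc_dist_commute)

lemma chain_dist_bridge_forward:
  "i \<le> m \<Longrightarrow> chain_dist g (i, a) (Suc m, 0) = chain_dist g (i, a) (m, g m) + 1"
  by (auto simp: chain_dist.simps root_dist_Suc cyc_dist_commute)

lemma chain_dist_bridge_backward:
  "m < i \<Longrightarrow> chain_dist g (i, a) (m, g m) = chain_dist g (i, a) (Suc m, 0) + 1"
  by (auto simp: chain_dist.simps root_dist_Suc_left cyc_dist_commute)

lemma chain_dist_edge_le:
  assumes "attach_ok n g" "u \<in> pg_vertices n" "(w, v) \<in> chain_edges n g"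
  shows "chain_dist g u v \<le> chain_dist g u w + 1"
proof -
  obtain i a k x l y where uwv: "u = (i, a)" "w = (k, x)" "v = (l, y)"
    by (cases u; cases w; cases v)
  have "i < n" "a < 5" "k < n" "x < 5" "l < n" "y < 5"
    using assms(2,3) uwv by (auto simp: pg_vertices_def chain_edges_def)
  from assms(3) consider
      (cycle) "k = l" "y = (x + 1) mod 5 \<or> x = (y + 1) mod 5"
    | (forward) "l = Suc k" "x = g k" "y = 0"
    | (backward) "k = Suc l" "x = 0" "y = g l"
    unfolding uwv chain_edges_def by auto
  then show ?thesis
  proof cases
    case cycle
    consider "i = k" | "i < k" | "k < i" by arith
    then show ?thesis
    proof cases
      case 3
      then have "g k < 5"
        using assms(1) \<open>i < n\<close> by (simp add: attach_ok_def)
      then have "cyc_dist y (g k) \<le> cyc_dist x (g k) + 1"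
        using cyc_dist_adjacent_le[of "g k" x y] cycle \<open>x < 5\<close> \<open>y < 5\<close>
        by (simp add: cyc_dist_commute)
      then show ?thesis
        using 3 cycle by (simp add: uwv chain_dist.simps)
    qed (use cycle cyc_dist_adjacent_le[of a x y] cyc_dist_adjacent_le[of 0 x y]
          \<open>a < 5\<close> \<open>x < 5\<close> \<open>y < 5\<close> in \<open>auto simp: uwv chain_dist.simps\<close>)
  next
    case forward
    then show ?thesis
      using chain_dist_bridge_forward[of i k g a] chain_dist_bridge_backward[of k i g a]
      by (cases "i \<le> k") (auto simp: uwv)
  next
    case backward
    then show ?thesis
      using chain_dist_bridge_forward[of i l g a] chain_dist_bridge_backward[of l i g a]
      by (cases "i \<le> l") (auto simp: uwv)
  qed
qed

lemma relpow_potential_le: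
  fixes f :: "'a \<Rightarrow> nat"
  assumes "(u, v) \<in> R ^^ k" "\<And>w x. (w, x) \<in> R \<Longrightarrow> f x \<le> f w + 1"
  shows "f v \<le> f u + k"
  using assms(1)
proof (induction k arbitrary: v)
  case (Suc k)
  then obtain w where "(u, w) \<in> R ^^ k" "(w, v) \<in> R"
    by (auto elim: relpow_Suc_E)
  with Suc.IH assms(2)[of w v] show ?case by fastforce
qed simp

lemma sym_relpow: "sym R \<Longrightarrow> sym (R ^^ k)"
proof (induction k)
  case (Suc k)
  then show ?case
    unfolding sym_def by (blast elim: relpow_Suc_E intro: relpow_Suc_I2)
qed (simp add: sym_def)

lemma pentagon_walk:
  assumes "k < n" "a < 5"
  shows "((k, a), (k, (a + m) mod 5)) \<in> chain_edges n g ^^ m"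
proof (induction m)
  case (Suc m)
  have "((k, (a + m) mod 5), (k, (a + Suc m) mod 5)) \<in> chain_edges n g"
    using assms by (simp add: chain_edges_def mod_Suc_eq)
  with Suc.IH show ?case by (rule relpow_Suc_I)
qed (use assms in simp)

lemma pentagon_path:
  assumes "k < n" "a < 5" "b < 5"
  shows "((k, a), (k, b)) \<in> chain_edges n g ^^ cyc_dist a b"
proof -
  have "(a + (b + 5 - a) mod 5) mod 5 = b" "(b + (a + 5 - b) mod 5) mod 5 = a"
    using less_5_cases[OF assms(2)] less_5_cases[OF assms(3)] by auto
  then have "((k, a), (k, b)) \<in> chain_edges n g ^^ ((b + 5 - a) mod 5)"
    and "((k, b), (k, a)) \<in> chain_edges n g ^^ ((a + 5 - b) mod 5)"
    using pentagon_walk[OF assms(1,2)] pentagon_walk[OF assms(1,3)] by metis+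
  then show ?thesis
    using sym_relpow[OF sym_chain_edges] unfolding cyc_dist_def min_def sym_def by auto
qed

lemma root_path:
  assumes "attach_ok n g" "i \<le> j" "j < n"
  shows "((i, 0), (j, 0)) \<in> chain_edges n g ^^ root_dist g i j"
  using assms(2,3)
proof (induction j rule: dec_induct)
  case base
  then show ?case by (simp add: root_dist_def)
next
  case (step j)
  have "g j < 5"
    using assms(1) step.prems by (simp add: attach_ok_def)
  then have "((j, 0), (j, g j)) \<in> chain_edges n g ^^ cyc_dist 0 (g j)"
    and "((j, g j), (Suc j, 0)) \<in> chain_edges n g ^^ 1"
    using step.prems pentagon_path[of j n 0 "g j" g] by (auto simp: chain_edges_def)
  with step show ?case
    by (auto simp: root_dist_Suc relpow_add)
qed

lemma chain_path_forward:
  assumes "attach_ok n g" "i < j" "j < n" "a < 5" "b < 5"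
  shows "((i, a), (j, b)) \<in> chain_edges n g ^^ chain_dist g (i, a) (j, b)"
proof -
  have "g i < 5"
    using assms by (simp add: attach_ok_def)
  then have "((i, a), (i, g i)) \<in> chain_edges n g ^^ cyc_dist a (g i)"
    and "((i, g i), (Suc i, 0)) \<in> chain_edges n g ^^ 1"
    and "((Suc i, 0), (j, 0)) \<in> chain_edges n g ^^ root_dist g (Suc i) j"
    and "((j, 0), (j, b)) \<in> chain_edges n g ^^ cyc_dist 0 b"
    using assms pentagon_path root_path by (auto simp: chain_edges_def)
  then have "((i, a), (j, b)) \<in> chain_edges n g ^^ (cyc_dist a (g i) + 1 + root_dist g (Suc i) j + cyc_dist 0 b)"
    unfolding relpow_add by blast
  then show ?thesis
    using assms(2) by (simp add: chain_dist.simps)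
qed

lemma chain_path:
  assumes "attach_ok n g" "u \<in> pg_vertices n" "v \<in> pg_vertices n"
  shows "(u, v) \<in> chain_edges n g ^^ chain_dist g u v"
proof -
  obtain i a j b where uv: "u = (i, a)" "v = (j, b)" "i < n" "a < 5" "j < n" "b < 5"
    using assms(2,3) by (auto simp: pg_vertices_def)
  consider "i < j" | "i = j" | "j < i" by arith
  then show ?thesis
  proof cases
    case 1
    then show ?thesis
      using chain_path_forward[OF assms(1) 1] uv by simp
  next
    case 2
    then show ?thesis
      using pentagon_path[of i n a b g] uv by (simp add: chain_dist.simps)
  next
    case 3
    then show ?thesis
      using chain_path_forward[OF assms(1) 3, of b a] sym_relpow[OF sym_chain_edges] uv
      by (auto simp: sym_def chain_dist_commute[of g "(i, a)"])
  qed
qed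

theorem chain_shortest_path:
  assumes "attach_ok n g" "u \<in> pg_vertices n" "v \<in> pg_vertices n"
  shows "(LEAST k. (u, v) \<in> chain_edges n g ^^ k) = chain_dist g u v"
proof (rule Least_equality)
  show "(u, v) \<in> chain_edges n g ^^ chain_dist g u v"
    using chain_path[OF assms] .
  fix k assume "(u, v) \<in> chain_edges n g ^^ k"
  then show "chain_dist g u v \<le> k"
    using relpow_potential_le[where f = "chain_dist g u"] chain_dist_edge_le[OF assms(1,2)] by fastforce
qed

lemma pg_dist_attach:
  "cs \<in> choice_seqs n \<Longrightarrow> u \<in> pg_vertices n \<Longrightarrow> v \<in> pg_vertices n \<Longrightarrow>
    pg_dist n cs u v = chain_dist (attach cs) u v"
  by (simp add: pg_dist_def pg_edges_attach chain_shortest_path attach_ok_choice_seqs)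


section \<open>Degrees and the degree distance\<close>

fun chain_deg :: "nat \<Rightarrow> (nat \<Rightarrow> nat) \<Rightarrow> nat \<times> nat \<Rightarrow> nat" where
  "chain_deg n g (k, x) = 2 + (if 0 < k \<and> x = 0 then 1 else 0) + (if Suc k < n \<and> x = g k then 1 else 0)"

lemma chain_edges_from:
  assumes "x < 5"
  shows "((k, x), (l, y)) \<in> chain_edges n g \<longleftrightarrow> k < n \<and> l < n \<and> y < 5 \<and>
    (k = l \<and> (y = (x + 1) mod 5 \<or> y = (x + 4) mod 5)
     \<or> l = Suc k \<and> x = g k \<and> y = 0
     \<or> k = Suc l \<and> x = 0 \<and> y = g l)"
proof -
  have "x = (y + 1) mod 5 \<longleftrightarrow> y = (x + 4) mod 5" if "y < 5"
    using less_5_cases[OF assms] less_5_cases[OF that] by (elim disjE) simp_all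
  then show ?thesis
    using assms unfolding chain_edges_def mem_Collect_eq prod.case by blast
qed

lemma chain_neighbours:
  assumes "attach_ok n g" "k < n" "x < 5"
  shows "{w \<in> pg_vertices n. ((k, x), w) \<in> chain_edges n g} =
    {(k, (x + 1) mod 5), (k, (x + 4) mod 5)}
    \<union> (if 0 < k \<and> x = 0 then {(k - 1, g (k - 1))} else {})
    \<union> (if Suc k < n \<and> x = g k then {(Suc k, 0)} else {})"
proof (intro set_eqI iffI)
  fix w assume "w \<in> {w \<in> pg_vertices n. ((k, x), w) \<in> chain_edges n g}"
  then show "w \<in> {(k, (x + 1) mod 5), (k, (x + 4) mod 5)}
    \<union> (if 0 < k \<and> x = 0 then {(k - 1, g (k - 1))} else {})
    \<union> (if Suc k < n \<and> x = g k then {(Suc k, 0)} else {})"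
    by (cases w) (auto simp: chain_edges_from[OF assms(3)])
next
  fix w assume w: "w \<in> {(k, (x + 1) mod 5), (k, (x + 4) mod 5)}
    \<union> (if 0 < k \<and> x = 0 then {(k - 1, g (k - 1))} else {})
    \<union> (if Suc k < n \<and> x = g k then {(Suc k, 0)} else {})"
  have "0 < k \<Longrightarrow> g (k - 1) < 5"
    using assms(1,2) by (simp add: attach_ok_def)
  with w assms(2) show "w \<in> {w \<in> pg_vertices n. ((k, x), w) \<in> chain_edges n g}"
    by (cases w) (auto simp: chain_edges_from[OF assms(3)] pg_vertices_def split: if_splits)
qed

lemma card_chain_neighbours:
  assumes "attach_ok n g" "u \<in> pg_vertices n"
  shows "card {w \<in> pg_vertices n. (u, w) \<in> chain_edges n g} = chain_deg n g u"
proof -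
  obtain k x where u: "u = (k, x)" "k < n" "x < 5"
    using assms(2) by (auto simp: pg_vertices_def)
  have "(x + 1) mod 5 \<noteq> (x + 4) mod 5"
    using less_5_cases[OF \<open>x < 5\<close>] by auto
  then show ?thesis
    unfolding u chain_neighbours[OF assms(1) u(2,3)]
    by (cases "0 < k \<and> x = 0"; cases "Suc k < n \<and> x = g k") (auto simp: card_insert_if)
qed

lemma pg_deg_attach:
  "cs \<in> choice_seqs n \<Longrightarrow> u \<in> pg_vertices n \<Longrightarrow> pg_deg n cs u = chain_deg n (attach cs) u"
  using card_chain_neighbours[OF attach_ok_choice_seqs]
  by (simp add: pg_deg_def pg_edges_attach[symmetric] pg_edges_def)

lemma pg_vertices_eq: "pg_vertices n = {..<n} \<times> {..<5}"
  by (auto simp: pg_vertices_def)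

lemma finite_pg_vertices [simp]: "finite (pg_vertices n)"
  by (simp add: pg_vertices_eq)

lemma card_pg_vertices: "card (pg_vertices n) = 5 * n"
  by (simp add: pg_vertices_eq card_cartesian_product)

lemma sum_pg_vertices: "(\<Sum>v\<in>pg_vertices n. f v) = (\<Sum>k<n. \<Sum>x<5. f (k, x))"
  by (simp add: pg_vertices_eq sum.cartesian_product)

lemma sum_pg_vertices_Suc:
  "(\<Sum>v\<in>pg_vertices (Suc n). f v) = (\<Sum>v\<in>pg_vertices n. f v) + (\<Sum>x<5. f (n, x))"
  by (simp add: sum_pg_vertices)

lemma chain_deg_Suc:
  "k < n \<Longrightarrow> chain_deg (Suc n) g (k, x) = chain_deg n g (k, x) + (if (k, x) = (n - 1, g (n - 1)) then 1 else 0)"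
  by auto

lemma sum_chain_deg_Suc:
  assumes "g m < 5"
  shows "(\<Sum>v\<in>pg_vertices (Suc m). chain_deg (Suc (Suc m)) g v * f v)
       = (\<Sum>v\<in>pg_vertices (Suc m). chain_deg (Suc m) g v * f v) + f (m, g m)"
proof -
  have "(\<Sum>v\<in>pg_vertices (Suc m). chain_deg (Suc (Suc m)) g v * f v)
      = (\<Sum>v\<in>pg_vertices (Suc m). chain_deg (Suc m) g v * f v + (if v = (m, g m) then f v else 0))"
    by (rule sum.cong) (auto simp: pg_vertices_def chain_deg_Suc simp del: chain_deg.simps split: if_splits)
  also have "\<dots> = (\<Sum>v\<in>pg_vertices (Suc m). chain_deg (Suc m) g v * f v) + f (m, g m)"
    using assms by (simp add: sum.distrib pg_vertices_def)
  finally show ?thesis .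
qed

lemma sum_chain_deg:
  "attach_ok (Suc m) g \<Longrightarrow> (\<Sum>v\<in>pg_vertices (Suc m). chain_deg (Suc m) g v) = 12 * m + 10"
proof (induction m)
  case 0
  then show ?case by (simp add: sum_pg_vertices sum_lessThan_5)
next
  case (Suc m)
  then have "attach_ok (Suc m) g" "g m < 5"
    by (simp_all add: attach_ok_def)
  with Suc.IH sum_chain_deg_Suc[of g m "\<lambda>_. 1"] show ?case
    by (simp add: sum_pg_vertices_Suc[of _ "Suc m"] sum_lessThan_5)
qed

definition transmission :: "nat \<Rightarrow> (nat \<Rightarrow> nat) \<Rightarrow> nat \<times> nat \<Rightarrow> nat" where
  "transmission n g w = (\<Sum>v\<in>pg_vertices n. chain_dist g v w)"

definition deg_transmission :: "nat \<Rightarrow> (nat \<Rightarrow> nat) \<Rightarrow> nat \<times> nat \<Rightarrow> nat" where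
  "deg_transmission n g w = (\<Sum>v\<in>pg_vertices n. chain_deg n g v * chain_dist g v w)"

definition degree_distance :: "nat \<Rightarrow> (nat \<Rightarrow> nat) \<Rightarrow> nat" where
  "degree_distance n g = (\<Sum>u\<in>pg_vertices n. chain_deg n g u * transmission n g u)"

lemma pg_schultz_attach:
  assumes "cs \<in> choice_seqs n"
  shows "pg_schultz n cs = real (degree_distance n (attach cs))"
proof -
  let ?V = "pg_vertices n" and ?d = "chain_deg n (attach cs)" and ?D = "chain_dist (attach cs)"
  let ?h = "\<lambda>u v. real ((?d u + ?d v) * ?D u v)"
  have "pg_schultz n cs = 1/2 * (\<Sum>u\<in>?V. \<Sum>v\<in>?V - {u}. ?h u v)"
    unfolding pg_schultz_def
    by (intro arg_cong[where f = "\<lambda>x. 1/2 * x"] sum.cong refl)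
      (simp add: pg_deg_attach[OF assms] pg_dist_attach[OF assms])
  also have "(\<Sum>u\<in>?V. \<Sum>v\<in>?V - {u}. ?h u v) = (\<Sum>u\<in>?V. \<Sum>v\<in>?V. ?h u v)"
    by (rule sum.cong[OF refl]) (simp add: sum_diff1)
  also have "\<dots> = (\<Sum>u\<in>?V. \<Sum>v\<in>?V. real (?d u * ?D u v)) + (\<Sum>u\<in>?V. \<Sum>v\<in>?V. real (?d v * ?D u v))"
    by (simp add: sum.distrib algebra_simps)
  also have "(\<Sum>u\<in>?V. \<Sum>v\<in>?V. real (?d v * ?D u v)) = (\<Sum>u\<in>?V. \<Sum>v\<in>?V. real (?d u * ?D u v))"
    by (subst sum.swap) (simp add: chain_dist_commute)
  also have "(\<Sum>u\<in>?V. \<Sum>v\<in>?V. real (?d u * ?D u v)) = real (degree_distance n (attach cs))"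
    by (simp add: degree_distance_def transmission_def sum_distrib_left chain_dist_commute)
  finally show ?thesis by simp
qed

lemma chain_dist_cong:
  assumes "\<And>k. Suc k < n \<Longrightarrow> g k = g' k" "u \<in> pg_vertices n" "v \<in> pg_vertices n"
  shows "chain_dist g u v = chain_dist g' u v"
proof -
  obtain i a j b where uv: "u = (i, a)" "v = (j, b)" "i < n" "j < n"
    using assms(2,3) by (auto simp: pg_vertices_def)
  have "root_dist g (Suc k) l = root_dist g' (Suc k) l" if "l < n" for k l
    unfolding root_dist_def using assms(1) that by (intro sum.cong) auto
  with assms(1) uv show ?thesis
    by (simp add: chain_dist.simps)
qed

lemma chain_deg_cong: "(\<And>k. Suc k < n \<Longrightarrow> g k = g' k) \<Longrightarrow> chain_deg n g u = chain_deg n g' u"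
  by (cases u) simp

lemma transmission_cong:
  assumes "\<And>k. Suc k < n \<Longrightarrow> g k = g' k" "w \<in> pg_vertices n"
  shows "transmission n g w = transmission n g' w"
  unfolding transmission_def using chain_dist_cong[OF assms(1) _ assms(2)] by (intro sum.cong) auto

lemma deg_transmission_cong:
  assumes "\<And>k. Suc k < n \<Longrightarrow> g k = g' k" "w \<in> pg_vertices n"
  shows "deg_transmission n g w = deg_transmission n g' w"
  unfolding deg_transmission_def
  using chain_deg_cong[OF assms(1)] chain_dist_cong[OF assms(1) _ assms(2)] by (intro sum.cong) auto

lemma degree_distance_cong:
  assumes "\<And>k. Suc k < n \<Longrightarrow> g k = g' k"
  shows "degree_distance n g = degree_distance n g'"
  unfolding degree_distance_def
  using chain_deg_cong[OF assms] transmission_cong[OF assms] by (intro sum.cong) auto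

lemma chain_dist_last_pentagon:
  "v \<in> pg_vertices m \<Longrightarrow> chain_dist g v (m, c) = chain_dist g v (m, 0) + cyc_dist 0 c"
  by (cases v) (simp add: pg_vertices_def chain_dist.simps)

lemma chain_dist_new_pentagon:
  "v \<in> pg_vertices (Suc m) \<Longrightarrow> chain_dist g v (Suc m, b) = chain_dist g v (m, g m) + 1 + cyc_dist 0 b"
  using chain_dist_last_pentagon[of v "Suc m" g b] chain_dist_bridge_forward[of "fst v" m g "snd v"]
  by (cases v) (simp add: pg_vertices_def)

lemma transmission_last_pentagon:
  assumes "c < 5"
  shows "transmission (Suc m) g (m, c) = transmission (Suc m) g (m, 0) + 5 * m * cyc_dist 0 c"
proof -
  have "(\<Sum>v\<in>pg_vertices m. chain_dist g v (m, c)) = (\<Sum>v\<in>pg_vertices m. chain_dist g v (m, 0) + cyc_dist 0 c)"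
    by (intro sum.cong refl chain_dist_last_pentagon)
  then have "transmission (Suc m) g (m, c) = (\<Sum>v\<in>pg_vertices m. chain_dist g v (m, 0) + cyc_dist 0 c) + 6"
    unfolding transmission_def sum_pg_vertices_Suc
    using sum_cyc_dist[OF assms] by (simp add: chain_dist.simps)
  moreover have "transmission (Suc m) g (m, 0) = (\<Sum>v\<in>pg_vertices m. chain_dist g v (m, 0)) + 6"
    unfolding transmission_def sum_pg_vertices_Suc
    using sum_cyc_dist[of 0] by (simp add: chain_dist.simps)
  ultimately show ?thesis
    by (simp add: sum.distrib card_pg_vertices)
qed


section \<open>Adding a pentagon\<close>

lemma deg_transmission_last_pentagon:
  assumes "attach_ok (Suc m) g" "c < 5"
  shows "deg_transmission (Suc m) g (m, c) = deg_transmission (Suc m) g (m, 0) + 12 * m * cyc_dist 0 c"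
proof -
  let ?d = "chain_deg (Suc m) g" and ?i = "if 0 < m then 1 else 0 :: nat"
  let ?S = "\<Sum>v\<in>pg_vertices m. ?d v * chain_dist g v (m, 0)"
  have old_deg: "(\<Sum>v\<in>pg_vertices m. ?d v) + ?i = 12 * m"
    using sum_chain_deg[OF assms(1)] by (simp add: sum_pg_vertices_Suc sum_lessThan_5)
  have "(\<Sum>v\<in>pg_vertices m. ?d v * chain_dist g v (m, c))
      = (\<Sum>v\<in>pg_vertices m. ?d v * chain_dist g v (m, 0) + cyc_dist 0 c * ?d v)"
    using chain_dist_last_pentagon[of _ m g c] by (intro sum.cong) (simp_all add: algebra_simps)
  moreover have "(\<Sum>x<5. ?d (m, x) * cyc_dist x c) = 12 + ?i * cyc_dist 0 c"
    using less_5_cases[OF assms(2)] by (auto simp: sum_lessThan_5 cyc_dist_def)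
  ultimately have "deg_transmission (Suc m) g (m, c)
      = ?S + cyc_dist 0 c * ((\<Sum>v\<in>pg_vertices m. ?d v) + ?i) + 12"
    unfolding deg_transmission_def sum_pg_vertices_Suc
    by (simp add: chain_dist.simps sum.distrib sum_distrib_left algebra_simps)
  moreover have "deg_transmission (Suc m) g (m, 0) = ?S + 12"
    unfolding deg_transmission_def sum_pg_vertices_Suc by (simp add: sum_lessThan_5 cyc_dist_def chain_dist.simps)
  ultimately show ?thesis
    unfolding old_deg by simp
qed

lemma transmission_Suc_old_vertex:
  assumes "u \<in> pg_vertices (Suc m)"
  shows "transmission (Suc (Suc m)) g u = transmission (Suc m) g u + 5 * chain_dist g u (m, g m) + 11"
proof -
  have "(\<Sum>x<5. chain_dist g (Suc m, x) u) = (\<Sum>x<5. chain_dist g u (m, g m) + 1 + cyc_dist 0 x)"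
    using chain_dist_new_pentagon[OF assms] by (simp add: chain_dist_commute[of g _ u])
  then show ?thesis
    unfolding transmission_def sum_pg_vertices_Suc[of _ "Suc m"]
    by (simp add: sum_lessThan_5 cyc_dist_def)
qed

lemma transmission_Suc_new_vertex:
  assumes "a < 5"
  shows "transmission (Suc (Suc m)) g (Suc m, a)
    = transmission (Suc m) g (m, g m) + 5 * Suc m * (1 + cyc_dist 0 a) + 6"
proof -
  have "(\<Sum>v\<in>pg_vertices (Suc m). chain_dist g v (Suc m, a))
      = (\<Sum>v\<in>pg_vertices (Suc m). chain_dist g v (m, g m) + (1 + cyc_dist 0 a))"
    using chain_dist_new_pentagon[of _ m g a] by (intro sum.cong) simp_all
  also have "\<dots> = transmission (Suc m) g (m, g m) + 5 * Suc m * (1 + cyc_dist 0 a)"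
    by (simp only: sum.distrib sum_constant card_pg_vertices transmission_def of_nat_id)
      (simp add: algebra_simps)
  finally show ?thesis
    unfolding transmission_def[of "Suc (Suc m)"] sum_pg_vertices_Suc[of _ "Suc m"]
    using sum_cyc_dist[OF assms] by (simp add: chain_dist.simps)
qed

lemma deg_transmission_Suc_new_root:
  assumes "attach_ok (Suc (Suc m)) g"
  shows "deg_transmission (Suc (Suc m)) g (Suc m, 0) = deg_transmission (Suc m) g (m, g m) + 12 * Suc m + 11"
proof -
  have ok: "attach_ok (Suc m) g" and "g m < 5"
    using assms by (simp_all add: attach_ok_def)
  have "(\<Sum>v\<in>pg_vertices (Suc m). chain_deg (Suc (Suc m)) g v * chain_dist g v (Suc m, 0))
      = (\<Sum>v\<in>pg_vertices (Suc m). chain_deg (Suc (Suc m)) g v * (chain_dist g v (m, g m) + 1))"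
    using chain_dist_new_pentagon[of _ m g 0] by (intro sum.cong) simp_all
  also have "\<dots> = (\<Sum>v\<in>pg_vertices (Suc m). chain_deg (Suc m) g v * (chain_dist g v (m, g m) + 1)) + 1"
    using sum_chain_deg_Suc[of g m "\<lambda>v. chain_dist g v (m, g m) + 1", OF \<open>g m < 5\<close>] by simp
  also have "\<dots> = deg_transmission (Suc m) g (m, g m) + (12 * m + 10) + 1"
    using sum_chain_deg[OF ok] by (simp add: deg_transmission_def sum.distrib algebra_simps)
  finally show ?thesis
    unfolding deg_transmission_def sum_pg_vertices_Suc[of _ "Suc m"]
    by (simp add: sum_lessThan_5 cyc_dist_def chain_dist.simps)
qed

lemma degree_distance_Suc_attachment:
  assumes "attach_ok (Suc (Suc m)) g"
  shows "degree_distance (Suc (Suc m)) g = degree_distance (Suc m) g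
    + 12 * transmission (Suc m) g (m, g m) + 5 * deg_transmission (Suc m) g (m, g m) + 247 * Suc m + 55"
proof -
  let ?w = "(m, g m)"
  have ok: "attach_ok (Suc m) g" and "g m < 5"
    using assms by (simp_all add: attach_ok_def)
  have "(\<Sum>u\<in>pg_vertices (Suc m). chain_deg (Suc (Suc m)) g u * transmission (Suc (Suc m)) g u)
      = (\<Sum>u\<in>pg_vertices (Suc m). chain_deg (Suc (Suc m)) g u
           * (transmission (Suc m) g u + 5 * chain_dist g u ?w + 11))"
    by (intro sum.cong refl) (simp add: transmission_Suc_old_vertex)
  also have "\<dots> = (\<Sum>u\<in>pg_vertices (Suc m). chain_deg (Suc m) g u
           * (transmission (Suc m) g u + 5 * chain_dist g u ?w + 11)) + transmission (Suc m) g ?w + 11"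
    using sum_chain_deg_Suc[of g m "\<lambda>u. transmission (Suc m) g u + 5 * chain_dist g u ?w + 11",
        OF \<open>g m < 5\<close>] by simp
  also have "\<dots> = degree_distance (Suc m) g + 5 * deg_transmission (Suc m) g ?w + 11 * (12 * m + 10)
      + transmission (Suc m) g ?w + 11"
    using sum_chain_deg[OF ok] sum_distrib_left[of 11 "chain_deg (Suc m) g" "pg_vertices (Suc m)"]
    by (simp add: degree_distance_def deg_transmission_def sum.distrib sum_distrib_left algebra_simps)
  finally have old: "(\<Sum>u\<in>pg_vertices (Suc m). chain_deg (Suc (Suc m)) g u * transmission (Suc (Suc m)) g u)
      = degree_distance (Suc m) g + 5 * deg_transmission (Suc m) g ?w + 11 * (12 * m + 10)
        + transmission (Suc m) g ?w + 11" .
  have new: "(\<Sum>x<5. chain_deg (Suc (Suc m)) g (Suc m, x) * transmission (Suc (Suc m)) g (Suc m, x))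
      = 11 * transmission (Suc m) g ?w + 115 * Suc m + 66"
    by (simp add: transmission_Suc_new_vertex sum_lessThan_5 cyc_dist_def)
  show ?thesis
    unfolding degree_distance_def[of "Suc (Suc m)"] sum_pg_vertices_Suc[of _ "Suc m"] old new
    by simp
qed

lemma transmission_root_Suc:
  assumes "attach_ok (Suc (Suc m)) g"
  shows "transmission (Suc (Suc m)) g (Suc m, 0)
    = transmission (Suc m) g (m, 0) + 5 * Suc m + 6 + 5 * m * cyc_dist 0 (g m)"
  using assms transmission_Suc_new_vertex[of 0 m g] transmission_last_pentagon[of "g m" m g]
  by (simp add: attach_ok_def)

lemma deg_transmission_root_Suc:
  assumes "attach_ok (Suc (Suc m)) g"
  shows "deg_transmission (Suc (Suc m)) g (Suc m, 0)
    = deg_transmission (Suc m) g (m, 0) + 12 * Suc m + 11 + 12 * m * cyc_dist 0 (g m)"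
proof -
  have "attach_ok (Suc m) g" "g m < 5"
    using assms by (simp_all add: attach_ok_def)
  then show ?thesis
    using deg_transmission_Suc_new_root[OF assms] deg_transmission_last_pentagon[of m g "g m"] by simp
qed

lemma degree_distance_Suc:
  assumes "attach_ok (Suc (Suc m)) g"
  shows "degree_distance (Suc (Suc m)) g = degree_distance (Suc m) g
    + 12 * transmission (Suc m) g (m, 0) + 5 * deg_transmission (Suc m) g (m, 0)
    + 247 * Suc m + 55 + 120 * m * cyc_dist 0 (g m)"
proof -
  have "attach_ok (Suc m) g" "g m < 5"
    using assms by (simp_all add: attach_ok_def)
  then show ?thesis
    using degree_distance_Suc_attachment[OF assms] transmission_last_pentagon[of "g m" m g]
      deg_transmission_last_pentagon[of m g "g m"]
    by simp
qed

section \<open>Expectation over the random choices\<close>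

definition expectation :: "real \<Rightarrow> nat \<Rightarrow> (nat list \<Rightarrow> real) \<Rightarrow> real" where
  "expectation p n f = (\<Sum>cs\<in>choice_seqs n. (\<Prod>c\<leftarrow>cs. choice_prob p c) * f cs)"

lemma choice_seqs_le_2: "n \<le> 2 \<Longrightarrow> choice_seqs n = {[]}"
  by (auto simp: choice_seqs_def)

lemma choice_seqs_Suc:
  assumes "2 \<le> n"
  shows "choice_seqs (Suc n) = (\<lambda>(cs, c). cs @ [c]) ` (choice_seqs n \<times> {1, 2, 3, 4})"
proof
  show "choice_seqs (Suc n) \<subseteq> (\<lambda>(cs, c). cs @ [c]) ` (choice_seqs n \<times> {1, 2, 3, 4})"
  proof
    fix xs assume xs: "xs \<in> choice_seqs (Suc n)"
    then have "xs \<noteq> []" "set xs \<subseteq> {1, 2, 3, 4}"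
      using assms by (auto simp: choice_seqs_def)
    moreover have "butlast xs \<in> choice_seqs n"
      using xs by (auto simp: choice_seqs_def dest: in_set_butlastD)
    moreover have "last xs \<in> {1, 2, 3, 4}"
      using \<open>xs \<noteq> []\<close> \<open>set xs \<subseteq> {1, 2, 3, 4}\<close> last_in_set by blast
    ultimately show "xs \<in> (\<lambda>(cs, c). cs @ [c]) ` (choice_seqs n \<times> {1, 2, 3, 4})"
      by (intro image_eqI[of _ _ "(butlast xs, last xs)"]) auto
  qed
qed (use assms in \<open>auto simp: choice_seqs_def\<close>)

lemma expectation_Suc:
  assumes "2 \<le> n"
  shows "expectation p (Suc n) f
    = expectation p n (\<lambda>cs. \<Sum>c\<in>{1, 2, 3, 4}. choice_prob p c * f (cs @ [c]))"
proof -
  have inj: "inj_on (\<lambda>(cs, c). cs @ [c]) (choice_seqs n \<times> {1, 2, 3, 4 :: nat})"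
    by (auto simp: inj_on_def)
  have "expectation p (Suc n) f = (\<Sum>(cs, c)\<in>choice_seqs n \<times> {1, 2, 3, 4}.
      (\<Prod>c\<leftarrow>cs @ [c]. choice_prob p c) * f (cs @ [c]))"
    unfolding expectation_def choice_seqs_Suc[OF assms] by (subst sum.reindex[OF inj]) (simp add: case_prod_beta)
  also have "\<dots> = (\<Sum>cs\<in>choice_seqs n. \<Sum>c\<in>{1, 2, 3, 4}. (\<Prod>c\<leftarrow>cs @ [c]. choice_prob p c) * f (cs @ [c]))"
    by (rule sum.cartesian_product[symmetric])
  also have "\<dots> = expectation p n (\<lambda>cs. \<Sum>c\<in>{1, 2, 3, 4}. choice_prob p c * f (cs @ [c]))"
    unfolding expectation_def by (simp add: sum_distrib_left algebra_simps)
  finally show ?thesis .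
qed

lemma expectation_cong:
  "(\<And>cs. cs \<in> choice_seqs n \<Longrightarrow> f cs = g cs) \<Longrightarrow> expectation p n f = expectation p n g"
  unfolding expectation_def by (intro sum.cong) auto

lemma expectation_add: "expectation p n (\<lambda>cs. f cs + g cs) = expectation p n f + expectation p n g"
  unfolding expectation_def by (simp add: sum.distrib algebra_simps)

lemma expectation_scale: "expectation p n (\<lambda>cs. a * f cs) = a * expectation p n f"
  unfolding expectation_def by (simp add: sum_distrib_left algebra_simps)

lemma expectation_const: "expectation p n (\<lambda>_. a) = a"
proof (induction n)
  case (Suc n)
  show ?case
  proof (cases "2 \<le> n")
    case True
    have "(\<Sum>c\<in>{1, 2, 3, 4 :: nat}. choice_prob p c * a) = a"
      by (simp add: choice_prob_def algebra_simps)
    with Suc.IH show ?thesis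
      by (simp add: expectation_Suc[OF True])
  qed (simp add: expectation_def choice_seqs_le_2)
qed (simp add: expectation_def choice_seqs_le_2)

lemma expected_cyc_dist:
  "(\<Sum>c\<in>{1, 2, 3, 4 :: nat}. choice_prob p c * (a + b * real (cyc_dist 0 c))) = a + b * (2 - p)"
  by (simp add: choice_prob_def cyc_dist_def algebra_simps)

text \<open>The factor \<open>n - 1\<close> covers \<open>n = 1\<close>, where the attachment vertex \<open>g 0 = 0\<close> is not random.\<close>

lemma expectation_attach_Suc:
  assumes "1 \<le> n"
    and F: "\<And>g. attach_ok (Suc n) g \<Longrightarrow> F g = R g + real (n - 1) * b * real (cyc_dist 0 (g (n - 1)))"
    and R: "\<And>g g'. (\<And>k. Suc k < n \<Longrightarrow> g k = g' k) \<Longrightarrow> R g = R g'"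
  shows "expectation p (Suc n) (\<lambda>cs. F (attach cs))
    = expectation p n (\<lambda>cs. R (attach cs)) + real (n - 1) * b * (2 - p)"
proof (cases "n = 1")
  case True
  have "attach_ok (Suc n) (attach [])"
    by (rule attach_ok_choice_seqs) (simp add: True choice_seqs_le_2)
  with True F show ?thesis
    by (simp add: expectation_def choice_seqs_le_2)
next
  case False
  then have "2 \<le> n"
    using assms(1) by simp
  have "(\<Sum>c\<in>{1, 2, 3, 4}. choice_prob p c * F (attach (cs @ [c])))
      = R (attach cs) + real (n - 1) * b * (2 - p)" if cs: "cs \<in> choice_seqs n" for cs
  proof -
    have "F (attach (cs @ [c])) = R (attach cs) + real (n - 1) * b * real (cyc_dist 0 c)"
      if c: "c \<in> {1, 2, 3, 4}" for c
    proof -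
      have len: "length cs = n - 2"
        using cs by (simp add: choice_seqs_def)
      have "cs @ [c] \<in> choice_seqs (Suc n)"
        using cs c \<open>2 \<le> n\<close> by (auto simp: choice_seqs_def)
      moreover have "attach (cs @ [c]) (n - 1) = c"
        using len \<open>2 \<le> n\<close> by (simp add: attach_def nth_append numeral_2_eq_2)
      moreover have "R (attach (cs @ [c])) = R (attach cs)"
        using len by (intro R) (auto simp: attach_def nth_append)
      ultimately show ?thesis
        using F[OF attach_ok_choice_seqs] by simp
    qed
    then show ?thesis
      using expected_cyc_dist[of p "R (attach cs)" "real (n - 1) * b"] by (simp cong: sum.cong)
  qed
  then have "expectation p (Suc n) (\<lambda>cs. F (attach cs))
      = expectation p n (\<lambda>cs. R (attach cs) + real (n - 1) * b * (2 - p))"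
    unfolding expectation_Suc[OF \<open>2 \<le> n\<close>] by (rule expectation_cong)
  then show ?thesis
    by (simp add: expectation_add expectation_const)
qed

lemma expected_root_transmission:
  assumes "1 \<le> n"
  shows "expectation p n (\<lambda>cs. real (transmission n (attach cs) (n - 1, 0)))
    = 6 * real n + 5/2 * real n * (real n - 1) + 5/2 * (2 - p) * (real n - 1) * (real n - 2)"
  using assms
proof (induction n rule: nat_induct_at_least)
  case base
  show ?case
    by (simp add: expectation_def choice_seqs_le_2 transmission_def sum_pg_vertices sum_lessThan_5
        chain_dist.simps cyc_dist_def)
next
  case (Suc n)
  then obtain m where n: "n = Suc m"
    by (cases n) auto
  have "expectation p (Suc n) (\<lambda>cs. real (transmission (Suc n) (attach cs) (n, 0)))
      = expectation p n (\<lambda>cs. real (transmission n (attach cs) (n - 1, 0)) + (5 * real n + 6))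
        + real (n - 1) * 5 * (2 - p)"
  proof (rule expectation_attach_Suc[OF Suc.hyps])
    fix g assume "attach_ok (Suc n) g"
    then show "real (transmission (Suc n) g (n, 0)) = real (transmission n g (n - 1, 0)) + (5 * real n + 6)
        + real (n - 1) * 5 * real (cyc_dist 0 (g (n - 1)))"
      using transmission_root_Suc[of m g] n by simp
  next
    fix g g' :: "nat \<Rightarrow> nat" assume "\<And>k. Suc k < n \<Longrightarrow> g k = g' k"
    then show "real (transmission n g (n - 1, 0)) + (5 * real n + 6)
        = real (transmission n g' (n - 1, 0)) + (5 * real n + 6)"
      using transmission_cong[of n g g' "(n - 1, 0)"] n by (simp add: pg_vertices_def)
  qed
  also have "\<dots> = 6 * real n + 5/2 * real n * (real n - 1) + 5/2 * (2 - p) * (real n - 1) * (real n - 2)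
      + (5 * real n + 6) + real (n - 1) * 5 * (2 - p)"
    using Suc.IH by (simp add: expectation_add expectation_const)
  finally show ?case
    using n by (simp add: field_simps)
qed

lemma expected_root_deg_transmission:
  assumes "1 \<le> n"
  shows "expectation p n (\<lambda>cs. real (deg_transmission n (attach cs) (n - 1, 0)))
    = 12 + 6 * real n * (real n - 1) + 11 * (real n - 1) + 6 * (2 - p) * (real n - 1) * (real n - 2)"
  using assms
proof (induction n rule: nat_induct_at_least)
  case base
  show ?case
    by (simp add: expectation_def choice_seqs_le_2 deg_transmission_def sum_pg_vertices sum_lessThan_5
        chain_dist.simps cyc_dist_def)
next
  case (Suc n)
  then obtain m where n: "n = Suc m"
    by (cases n) auto
  have "expectation p (Suc n) (\<lambda>cs. real (deg_transmission (Suc n) (attach cs) (n, 0)))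
      = expectation p n (\<lambda>cs. real (deg_transmission n (attach cs) (n - 1, 0)) + (12 * real n + 11))
        + real (n - 1) * 12 * (2 - p)"
  proof (rule expectation_attach_Suc[OF Suc.hyps])
    fix g assume "attach_ok (Suc n) g"
    then show "real (deg_transmission (Suc n) g (n, 0)) = real (deg_transmission n g (n - 1, 0))
        + (12 * real n + 11) + real (n - 1) * 12 * real (cyc_dist 0 (g (n - 1)))"
      using deg_transmission_root_Suc[of m g] n by simp
  next
    fix g g' :: "nat \<Rightarrow> nat" assume "\<And>k. Suc k < n \<Longrightarrow> g k = g' k"
    then show "real (deg_transmission n g (n - 1, 0)) + (12 * real n + 11)
        = real (deg_transmission n g' (n - 1, 0)) + (12 * real n + 11)"
      using deg_transmission_cong[of n g g' "(n - 1, 0)"] n by (simp add: pg_vertices_def)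
  qed
  also have "\<dots> = 12 + 6 * real n * (real n - 1) + 11 * (real n - 1) + 6 * (2 - p) * (real n - 1) * (real n - 2)
      + (12 * real n + 11) + real (n - 1) * 12 * (2 - p)"
    using Suc.IH by (simp add: expectation_add expectation_const)
  finally show ?case
    using n by (simp add: field_simps)
qed

lemma expected_degree_distance:
  assumes "1 \<le> n"
  shows "expectation p n (\<lambda>cs. real (degree_distance n (attach cs)))
    = (60 - 20 * p) * real n ^ 3 + (60 * p + 7) * real n ^ 2 - (40 * p + 7) * real n"
  using assms
proof (induction n rule: nat_induct_at_least)
  case base
  show ?case
    by (simp add: expectation_def choice_seqs_le_2 degree_distance_def transmission_def
        sum_pg_vertices sum_lessThan_5 chain_dist.simps cyc_dist_def)
next
  case (Suc n)
  then obtain m where n: "n = Suc m"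
    by (cases n) auto
  let ?R = "\<lambda>g. real (degree_distance n g) + 12 * real (transmission n g (n - 1, 0))
    + 5 * real (deg_transmission n g (n - 1, 0)) + (247 * real n + 55)"
  have "expectation p (Suc n) (\<lambda>cs. real (degree_distance (Suc n) (attach cs)))
      = expectation p n (\<lambda>cs. ?R (attach cs)) + real (n - 1) * 120 * (2 - p)"
  proof (rule expectation_attach_Suc[OF Suc.hyps])
    fix g assume "attach_ok (Suc n) g"
    then show "real (degree_distance (Suc n) g) = ?R g + real (n - 1) * 120 * real (cyc_dist 0 (g (n - 1)))"
      using degree_distance_Suc[of m g] n by simp
  next
    fix g g' :: "nat \<Rightarrow> nat" assume "\<And>k. Suc k < n \<Longrightarrow> g k = g' k"
    then show "?R g = ?R g'"
      using degree_distance_cong[of n g g'] transmission_cong[of n g g' "(n - 1, 0)"]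
        deg_transmission_cong[of n g g' "(n - 1, 0)"] n
      by (simp add: pg_vertices_def)
  qed
  also have "\<dots> = (60 - 20 * p) * real n ^ 3 + (60 * p + 7) * real n ^ 2 - (40 * p + 7) * real n
      + 12 * (6 * real n + 5/2 * real n * (real n - 1) + 5/2 * (2 - p) * (real n - 1) * (real n - 2))
      + 5 * (12 + 6 * real n * (real n - 1) + 11 * (real n - 1) + 6 * (2 - p) * (real n - 1) * (real n - 2))
      + (247 * real n + 55) + real (n - 1) * 120 * (2 - p)"
    using Suc.IH expected_root_transmission[OF Suc.hyps] expected_root_deg_transmission[OF Suc.hyps]
    by (simp add: expectation_add expectation_scale expectation_const)
  finally show ?case
    using n by (simp add: field_simps power2_eq_square power3_eq_cube)
qed

theorem theorem2p2:
  fixes p1 :: real and n :: nat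
  assumes "0 \<le> p1" and "p1 \<le> 1" and "n \<ge> 1"
  shows "expected_schultz p1 n
           = (60 - 20 * p1) * real n ^ 3 + (60 * p1 + 7) * real n ^ 2 - (40 * p1 + 7) * real n"
proof -
  \<comment> \<open>The identity is polynomial in \<open>p1\<close>.\<close>
  have "expected_schultz p1 n = expectation p1 n (\<lambda>cs. real (degree_distance n (attach cs)))"
    unfolding expected_schultz_def expectation_def using pg_schultz_attach by (intro sum.cong) auto
  also have "\<dots> = (60 - 20 * p1) * real n ^ 3 + (60 * p1 + 7) * real n ^ 2 - (40 * p1 + 7) * real n"
    using expected_degree_distance[OF assms(3)] .
  finally show ?thesis .
qed

end
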